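(* Let $\wp$ be a behavioral quantifier prefix with pairwise distinct propositions and let $\Psi\subseteq\mathrm{Asg}(\mathrm{ap}(\wp))$ be Borelian. Then the quantification game $\mathcal G_{\wp,\Psi}$ satisfies: (1) if Eloise wins $\mathcal G_{\wp,\Psi}$, then there exists $E\in\mathrm{evl}_{\exists\forall}(C_{\forall\exists}(\wp))$ with $E\subseteq\Psi$; (2) if Abelard wins $\mathcal G_{\wp,\Psi}$, then $E\not\subseteq\Psi$ for every $E\in\mathrm{evl}_{\exists\forall}(C_{\exists\forall}(\wp))$.
   Context: Let $AP$ be a set of atomic propositions and $\mathbb B=\{\top,\bot\}$. A temporal valuation is a function $f:\mathbb N\to\mathbb B$. An assignment is a partial function $\chi:AP\rightharpoonup(\mathbb N\to\mathbb B)$; $\mathrm{Asg}$ is the set of all assignments, $\mathrm{Asg}(P)$ the set of assignments with domain exactly $P\subseteq AP$. For an assignment $\chi$, $p\in AP$ and a temporal valuation $f$, $\chi[p\mapsto f]$ is the assignment that agrees with $\chi$ except that it maps $p$ to $f$. A hyperassignment is a set $\mathcal X$ with $\emptyset\neq\mathcal X\subseteq 2^{\mathrm{Asg}(P)}$ and $\emptyset\notin\mathcal X$, for some $P\subseteq AP$; this $P$ is denoted $\mathrm{ap}(\mathcal X)$. A choice function for $\mathcal X$ is a map $c:\mathcal X\to\mathrm{Asg}$ with $c(X)\in X$ for all $X\in\mathcal X$. The dual of $\mathcal X$ is $\overline{\mathcal X}=\{\mathrm{img}(c): c\text{ a choice function for }\mathcal X\}$. A functor over $P\subseteq AP$ is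 a function $F:\mathrm{Asg}(P)\to(\mathbb N\to\mathbb B)$; $\mathrm{Fnc}(P)$ is the set of all of them. $\mathrm{ext}(\chi,F,p)=\chi[p\mapsto F(\chi)]$ and $\mathrm{ext}(X,F,p)=\{\mathrm{ext}(\chi,F,p):\chi\in X\}$. For $\chi_1,\chi_2\in\mathrm{Asg}(P)$, $p\in P$, $k\in\mathbb N$: $\chi_1\approx^{>k}_p\chi_2$ iff $\chi_1(q)=\chi_2(q)$ for all $q\in P\setminus\{p\}$ and $\chi_1(p)(t)=\chi_2(p)(t)$ for all $t\le k$; $\chi_1\approx^{\ge k}_p\chi_2$ is defined the same way with $t<k$ in place of $t\le k$. $F\in\mathrm{Fnc}(P)$ is behavioral (resp. strongly behavioral) w.r.t. $p\in P$ if $F(\chi_1)(k)=F(\chi_2)(k)$ for all $k\in\mathbb N$ and all $\chi_1,\chi_2$ with $\chi_1\approx^{>k}_p\chi_2$ (resp. $\chi_1\approx^{\ge k}_p\chi_2$). A quantifier specification is a pair $\sigma=\langle P_B,P_S\rangle$ of subsets of $AP$; $\mathrm{Fnc}_\sigma(P)$ is the set of $F\in\mathrm{Fnc}(P)$ that are behavioral w.r.t. every $p\in P_B\cap P$ and strongly behavioral w.r.t. every $p\in P_S\cap P$. $\mathrm{ext}_\sigma(\mathcal X,p)=\{\mathrm{ext}(X,F,p):X\in\mathcal X,\ F\in\mathrm{Fnc}_\sigma(\mathrm{ap}(\mathcal X))\}$. Union of specifications is componentwise. Write $\mathsf B=\langle AP,\emptyset\rangle$. A quantifier prefix is a finite sequence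 $\wp=Q_1^{\sigma_1}p_1\cdots Q_n^{\sigma_n}p_n$ with $Q_i\in\{\exists,\forall\}$; $\mathrm{ap}(\wp)=\{p_1,\dots,p_n\}$, $\epsilon$ is the empty prefix. It is behavioral if every $\sigma_i=\mathsf B$. The quantifier $\exists$ is $\exists\forall$-coherent and $\forall$ is $\forall\exists$-coherent. Evolution: $\mathrm{evl}_\alpha(\mathcal X,Q^\sigma p)=\mathrm{ext}_\sigma(\mathcal X,p)$ if $Q$ is $\alpha$-coherent, and $\overline{\mathrm{ext}_\sigma(\overline{\mathcal X},p)}$ otherwise; $\mathrm{evl}_\alpha(\mathcal X,\epsilon)=\mathcal X$, $\mathrm{evl}_\alpha(\mathcal X,Q^\sigma p.\wp)=\mathrm{evl}_\alpha(\mathrm{evl}_\alpha(\mathcal X,Q^\sigma p),\wp)$, and $\mathrm{evl}_\alpha(\wp)=\mathrm{evl}_\alpha(\{\{\emptyset\}\},\wp)$ with $\emptyset$ the empty assignment. Canonical forms. Every behavioral prefix $\wp$ can be uniquely written as $\exists^{\mathsf B}\vec q_0.\forall^{\mathsf B}\vec p_1.\exists^{\mathsf B}\vec q_1\cdots\forall^{\mathsf B}\vec p_k.\exists^{\mathsf B}\vec q_k.\forall^{\mathsf B}\vec p_{k+1}$ with $k\in\mathbb N$, $\vec q_0,\vec p_{k+1}$ possibly empty and $\vec p_i,\vec q_i$ nonempty for $1\le i\le k$ (where $Q^\sigma\vec p$ quantifies the entries of $\vec p$ in order); then $C_{\exists\forall}(\wp)=\exists^{\mathsf B}\vec q_0\cdots\exists^{\mathsf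 B}\vec q_k.\forall^{\tau_1}\vec p_1\cdots\forall^{\tau_{k+1}}\vec p_{k+1}$ where $\tau_i=\mathsf B\cup\langle\emptyset,\vec q_i\cup\cdots\cup\vec q_k\rangle$ (for $i=k+1$, $\tau_{k+1}=\mathsf B$). Dually, writing $\wp$ uniquely as $\forall^{\mathsf B}\vec p_0.\exists^{\mathsf B}\vec q_1.\forall^{\mathsf B}\vec p_1\cdots\exists^{\mathsf B}\vec q_k.\forall^{\mathsf B}\vec p_k.\exists^{\mathsf B}\vec q_{k+1}$ (with $\vec p_0,\vec q_{k+1}$ possibly empty, the others nonempty), $C_{\forall\exists}(\wp)=\forall^{\mathsf B}\vec p_0\cdots\forall^{\mathsf B}\vec p_k.\exists^{\tau_1}\vec q_1\cdots\exists^{\tau_{k+1}}\vec q_{k+1}$ with $\tau_i=\mathsf B\cup\langle\emptyset,\vec p_i\cup\cdots\cup\vec p_k\rangle$. Words and Borel sets. For finite $P\subseteq AP$, $\mathrm{Val}(P)$ is the set of maps $P\to\mathbb B$; the word function $w:\mathrm{Asg}(P)\to\mathrm{Val}(P)^\omega$, $w(\chi)_t(p)=\chi(p)(t)$, is a bijection. $\Psi\subseteq\mathrm{Asg}(P)$ is Borelian if $w(\Psi)$ is a Borel set in the product (Cantor) topology on $\mathrm{Val}(P)^\omega$. Games. A game consists of disjoint sets of positions of Eloise and Abelard, an initial position, a move relation in which every position has a successor, a set $O$ of observable positions and a winning set $W\subseteq O^\omega$. A history is a finite path from the initial position; a strategy for a player maps each history ending in one of its positions to a successor of that position; a pair of strategies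 induces a unique infinite play; the observation of a play is the sequence of observable positions occurring in it, in order. Eloise wins if she has a strategy such that for every Abelard strategy the observation of the induced play lies in $W$; Abelard wins if he has a strategy such that for every Eloise strategy the observation is not in $W$. Quantification game $\mathcal G_{\wp,\Psi}$ for a behavioral prefix $\wp=Q_1^{\mathsf B}p_1\cdots Q_n^{\mathsf B}p_n$ (distinct $p_i$) and $\Psi\subseteq\mathrm{Asg}(\mathrm{ap}(\wp))$: positions are the valuations $v$ with domain $\{p_1,\dots,p_m\}$ for some $0\le m\le n$ ($m=|\mathrm{dom}(v)|$); $v$ belongs to Eloise iff $m<n$ and $Q_{m+1}=\exists$, otherwise to Abelard; the initial position is the empty valuation; moves go from $v$ with $m<n$ to any extension of $v$ with domain $\{p_1,\dots,p_{m+1}\}$, and from every total valuation ($m=n$) to the empty valuation; the observable positions are the total valuations $\mathrm{Val}(\mathrm{ap}(\wp))$; the winning set is $W=w(\Psi)$. *)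

theory Defs
  imports "HOL-Analysis.Analysis" "HOL-Library.Infinite_Set"
begin

type_synonym tval = "nat \<Rightarrow> bool"
type_synonym 'ap asg = "'ap \<rightharpoonup> tval"

definition Asg :: "'ap set \<Rightarrow> 'ap asg set" where
  "Asg P = {\<gamma>. dom \<gamma> = P}"

definition hyperassignment :: "'ap asg set set \<Rightarrow> bool" where
  "hyperassignment \<X> \<longleftrightarrow> \<X> \<noteq> {} \<and> {} \<notin> \<X> \<and> (\<exists>P. \<forall>X\<in>\<X>. X \<subseteq> Asg P)"

text \<open>ap of a hyperassignment: the common domain of its assignments.\<close>
definition hap :: "'ap asg set set \<Rightarrow> 'ap set" where
  "hap \<X> = dom (SOME \<gamma>. \<exists>X\<in>\<X>. \<gamma> \<in> X)"

definition dual :: "'ap asg set set \<Rightarrow> 'ap asg set set" where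
  "dual \<X> = {c ` \<X> | c. \<forall>X\<in>\<X>. c X \<in> X}"

type_synonym 'ap fnc = "'ap asg \<Rightarrow> tval"

definition ext_asg :: "'ap asg \<Rightarrow> 'ap fnc \<Rightarrow> 'ap \<Rightarrow> 'ap asg" where
  "ext_asg \<gamma> F p = \<gamma>(p \<mapsto> F \<gamma>)"

definition ext_set :: "'ap asg set \<Rightarrow> 'ap fnc \<Rightarrow> 'ap \<Rightarrow> 'ap asg set" where
  "ext_set X F p = (\<lambda>\<gamma>. ext_asg \<gamma> F p) ` X"

definition approx_gt :: "'ap set \<Rightarrow> 'ap \<Rightarrow> nat \<Rightarrow> 'ap asg \<Rightarrow> 'ap asg \<Rightarrow> bool" where
  "approx_gt P p k \<gamma>1 \<gamma>2 \<longleftrightarrow>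
     (\<forall>q\<in>P - {p}. \<gamma>1 q = \<gamma>2 q) \<and> (\<forall>t\<le>k. the (\<gamma>1 p) t = the (\<gamma>2 p) t)"

definition approx_ge :: "'ap set \<Rightarrow> 'ap \<Rightarrow> nat \<Rightarrow> 'ap asg \<Rightarrow> 'ap asg \<Rightarrow> bool" where
  "approx_ge P p k \<gamma>1 \<gamma>2 \<longleftrightarrow>
     (\<forall>q\<in>P - {p}. \<gamma>1 q = \<gamma>2 q) \<and> (\<forall>t<k. the (\<gamma>1 p) t = the (\<gamma>2 p) t)"

definition behavioral :: "'ap set \<Rightarrow> 'ap fnc \<Rightarrow> 'ap \<Rightarrow> bool" where
  "behavioral P F p \<longleftrightarrow> (\<forall>k. \<forall>\<gamma>1\<in>Asg P. \<forall>\<gamma>2\<in>Asg P.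
      approx_gt P p k \<gamma>1 \<gamma>2 \<longrightarrow> F \<gamma>1 k = F \<gamma>2 k)"

definition strongly_behavioral :: "'ap set \<Rightarrow> 'ap fnc \<Rightarrow> 'ap \<Rightarrow> bool" where
  "strongly_behavioral P F p \<longleftrightarrow> (\<forall>k. \<forall>\<gamma>1\<in>Asg P. \<forall>\<gamma>2\<in>Asg P.
      approx_ge P p k \<gamma>1 \<gamma>2 \<longrightarrow> F \<gamma>1 k = F \<gamma>2 k)"

text \<open>Quantifier specifications \<langle>P_B, P_S\<rangle>.\<close>
type_synonym 'ap spec = "'ap set \<times> 'ap set"

definition spec_union :: "'ap spec \<Rightarrow> 'ap spec \<Rightarrow> 'ap spec" where
  "spec_union s1 s2 = (fst s1 \<union> fst s2, snd s1 \<union> snd s2)"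

definition specB :: "'ap spec" where
  "specB = (UNIV, {})"

definition Fnc_spec :: "'ap spec \<Rightarrow> 'ap set \<Rightarrow> 'ap fnc set" where
  "Fnc_spec \<sigma> P = {F. (\<forall>p\<in>fst \<sigma> \<inter> P. behavioral P F p) \<and>
                       (\<forall>p\<in>snd \<sigma> \<inter> P. strongly_behavioral P F p)}"

definition ext_spec :: "'ap spec \<Rightarrow> 'ap asg set set \<Rightarrow> 'ap \<Rightarrow> 'ap asg set set" where
  "ext_spec \<sigma> \<X> p = {ext_set X F p | X F. X \<in> \<X> \<and> F \<in> Fnc_spec \<sigma> (hap \<X>)}"

datatype quant = QEx | QAll

datatype coh = ExAll | AllEx

definition coherent :: "coh \<Rightarrow> quant \<Rightarrow> bool" where
  "coherent \<alpha> Q \<longleftrightarrow> (\<alpha> = ExAll \<and> Q = QEx) \<or> (\<alpha> = AllEx \<and> Q = QAll)"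

text \<open>A prefix entry Q^\<sigma> p is the triple (Q, \<sigma>, p); a prefix is a list of entries.\<close>
type_synonym 'ap prefix = "(quant \<times> 'ap spec \<times> 'ap) list"

definition pvars :: "'ap prefix \<Rightarrow> 'ap list" where
  "pvars pf = map (\<lambda>e. snd (snd e)) pf"

definition pap :: "'ap prefix \<Rightarrow> 'ap set" where
  "pap pf = set (pvars pf)"

definition behavioral_prefix :: "'ap prefix \<Rightarrow> bool" where
  "behavioral_prefix pf \<longleftrightarrow> (\<forall>e\<in>set pf. fst (snd e) = specB)"

definition evl_step :: "coh \<Rightarrow> 'ap asg set set \<Rightarrow> quant \<times> 'ap spec \<times> 'ap \<Rightarrow> 'ap asg set set" where
  "evl_step \<alpha> \<X> e = (case e of (Q, \<sigma>, p) \<Rightarrow>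
     (if coherent \<alpha> Q then ext_spec \<sigma> \<X> p else dual (ext_spec \<sigma> (dual \<X>) p)))"

definition evl :: "coh \<Rightarrow> 'ap asg set set \<Rightarrow> 'ap prefix \<Rightarrow> 'ap asg set set" where
  "evl \<alpha> \<X> pf = foldl (evl_step \<alpha>) \<X> pf"

definition evl_prefix :: "coh \<Rightarrow> 'ap prefix \<Rightarrow> 'ap asg set set" where
  "evl_prefix \<alpha> pf = evl \<alpha> {{Map.empty}} pf"

definition qvars :: "quant \<Rightarrow> 'ap prefix \<Rightarrow> 'ap set" where
  "qvars Q pf = {snd (snd e) | e. e \<in> set pf \<and> fst e = Q}"

text \<open>Second part of the canonical form: every variable quantified by Q in the
  original prefix, re-quantified by Q with specification B \<union> \<langle>\<emptyset>, vars of the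
  other quantifier occurring later\<rangle>.\<close>
fun canon_tail :: "quant \<Rightarrow> quant \<Rightarrow> 'ap prefix \<Rightarrow> 'ap prefix" where
  "canon_tail Q Q' [] = []"
| "canon_tail Q Q' (e # ws) =
     (if fst e = Q then [(Q, spec_union specB ({}, qvars Q' ws), snd (snd e))] else [])
     @ canon_tail Q Q' ws"

definition canon_head :: "quant \<Rightarrow> 'ap prefix \<Rightarrow> 'ap prefix" where
  "canon_head Q pf = map (\<lambda>e. (Q, specB, snd (snd e))) (filter (\<lambda>e. fst e = Q) pf)"

definition C_EA :: "'ap prefix \<Rightarrow> 'ap prefix" where
  "C_EA pf = canon_head QEx pf @ canon_tail QAll QEx pf"

definition C_AE :: "'ap prefix \<Rightarrow> 'ap prefix" where
  "C_AE pf = canon_head QAll pf @ canon_tail QEx QAll pf"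

type_synonym 'ap val = "'ap \<rightharpoonup> bool"

definition Val :: "'ap set \<Rightarrow> 'ap val set" where
  "Val P = {v. dom v = P}"

definition word :: "'ap asg \<Rightarrow> nat \<Rightarrow> 'ap val" where
  "word \<gamma> = (\<lambda>t p. map_option (\<lambda>f. f t) (\<gamma> p))"

definition cantor_topology :: "'ap set \<Rightarrow> (nat \<Rightarrow> 'ap val) topology" where
  "cantor_topology P = product_topology (\<lambda>_. discrete_topology (Val P)) UNIV"

definition borelian :: "'ap set \<Rightarrow> 'ap asg set \<Rightarrow> bool" where
  "borelian P \<Psi> \<longleftrightarrow>
     word ` \<Psi> \<in> sigma_sets (topspace (cantor_topology P)) {S. openin (cantor_topology P) S}"

record 'p game =
  posE :: "'p set"
  posA :: "'p set"
  initp :: 'p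
  moves :: "('p \<times> 'p) set"
  obsp :: "'p set"
  winset :: "(nat \<Rightarrow> 'p) set"

definition history :: "'p game \<Rightarrow> 'p list \<Rightarrow> bool" where
  "history G h \<longleftrightarrow> h \<noteq> [] \<and> hd h = initp G \<and>
     (\<forall>i. Suc i < length h \<longrightarrow> (h ! i, h ! Suc i) \<in> moves G)"

definition strategy :: "'p game \<Rightarrow> 'p set \<Rightarrow> ('p list \<Rightarrow> 'p) \<Rightarrow> bool" where
  "strategy G S s \<longleftrightarrow> (\<forall>h. history G h \<and> last h \<in> S \<longrightarrow> (last h, s h) \<in> moves G)"

fun hist :: "'p game \<Rightarrow> ('p list \<Rightarrow> 'p) \<Rightarrow> ('p list \<Rightarrow> 'p) \<Rightarrow> nat \<Rightarrow> 'p list" where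
  "hist G sE sA 0 = [initp G]"
| "hist G sE sA (Suc n) = (let h = hist G sE sA n in
      h @ [if last h \<in> posE G then sE h else sA h])"

definition play :: "'p game \<Rightarrow> ('p list \<Rightarrow> 'p) \<Rightarrow> ('p list \<Rightarrow> 'p) \<Rightarrow> nat \<Rightarrow> 'p" where
  "play G sE sA n = last (hist G sE sA n)"

text \<open>Observation of a play: the sequence of observable positions in order;
  None if it is finite (then it is not in W \<subseteq> O^\<omega>).\<close>
definition observation :: "'p set \<Rightarrow> (nat \<Rightarrow> 'p) \<Rightarrow> (nat \<Rightarrow> 'p) option" where
  "observation Obs \<rho> = (if infinite {i. \<rho> i \<in> Obs}
      then Some (\<rho> \<circ> Infinite_Set.enumerate {i. \<rho> i \<in> Obs}) else None)"

definition eloise_wins :: "'p game \<Rightarrow> bool" where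
  "eloise_wins G \<longleftrightarrow> (\<exists>sE. strategy G (posE G) sE \<and>
     (\<forall>sA. strategy G (posA G) sA \<longrightarrow>
        observation (obsp G) (play G sE sA) \<in> Some ` winset G))"

definition abelard_wins :: "'p game \<Rightarrow> bool" where
  "abelard_wins G \<longleftrightarrow> (\<exists>sA. strategy G (posA G) sA \<and>
     (\<forall>sE. strategy G (posE G) sE \<longrightarrow>
        observation (obsp G) (play G sE sA) \<notin> Some ` winset G))"

definition qgame :: "'ap prefix \<Rightarrow> 'ap asg set \<Rightarrow> 'ap val game" where
  "qgame pf \<Psi> = (let xs = pvars pf; n = length pf;
      allpos = {v. \<exists>m\<le>n. dom v = set (take m xs)};
      epos = {v. \<exists>m<n. dom v = set (take m xs) \<and> fst (pf ! m) = QEx} in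
    \<lparr> posE = epos,
      posA = allpos - epos,
      initp = Map.empty,
      moves = {(v, v'). \<exists>m<n. dom v = set (take m xs) \<and>
                  dom v' = set (take (Suc m) xs) \<and> v \<subseteq>\<^sub>m v'}
              \<union> {(v, Map.empty) | v. dom v = set xs},
      obsp = Val (set xs),
      winset = word ` \<Psi> \<rparr>)"

end

theory Submission
  imports Defs
begin

text \<open>
  Suppose Eloise has a winning strategy. Every assignment \<open>\<theta>\<close> to Abelard's variables
  yields a strategy of Abelard that announces, in round \<open>t\<close> of the game, the value at time
  \<open>t\<close> of each of his variables; the resulting play is won by Eloise, so the assignment read
  off from it lies in \<open>\<Psi>\<close>. Eloise's answer to a variable in round \<open>t\<close> depends only on
  what she has seen so far: on \<open>\<theta>\<close> up to time \<open>t\<close>, and only up to time \<open>t - 1\<close> for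
  Abelard's variables quantified after hers. Her answers are therefore behavioral functors that
  are strongly behavioral in the later universal variables, which is exactly what the canonical
  form \<open>C_AE\<close> admits. Evolving the hyperassignment along \<open>C_AE\<close> with these functors
  yields an element contained in the set of outcomes of such plays, hence in \<open>\<Psi>\<close>.
  A winning strategy of Abelard is treated dually along \<open>C_EA\<close>: his choices are elements
  of the dual hyperassignment, and each of them meets every element of the evolution.
\<close>

lemma set_take_inj:
  assumes "distinct xs" "m \<le> length xs" "m' \<le> length xs" "set (take m xs) = set (take m' xs)"
  shows "m = m'"
  using assms by (metis distinct_card distinct_take length_take min.absorb2)

lemma nth_notin_set_take:
  assumes "distinct xs" "m < length xs"
  shows "xs ! m \<notin> set (take m xs)"
  using assms by (auto simp: in_set_conv_nth nth_eq_iff_index_eq)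

lemma slot_le: "t * d + m \<le> k * d + j \<Longrightarrow> j < d \<Longrightarrow> t \<le> (k::nat)"
proof -
  assume "t * d + m \<le> k * d + j" "j < d"
  then have "t * d < Suc k * d" by simp
  then show "t \<le> k" by (simp only: mult_less_cancel2) simp
qed

lemma slot_less:
  assumes "t * d + m \<le> k * d + j" "j < m"
  shows "t < (k::nat)"
proof (rule ccontr)
  assume "\<not> t < k"
  then have "k * d \<le> t * d" by simp
  then show False using assms by linarith
qed

lemma enumerate_range_strict_mono:
  fixes f :: "nat \<Rightarrow> nat"
  assumes "strict_mono f"
  shows "enumerate (range f) t = f t"
proof (induction t)
  case 0
  show ?case unfolding enumerate_0
    by (rule Least_equality) (auto simp: strict_mono_less_eq[OF assms])
next
  case (Suc t)
  have inf: "infinite (range f)"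
    using range_inj_infinite strict_mono_imp_inj_on[OF assms] by blast
  show ?case unfolding enumerate_Suc''[OF inf] Suc
    by (intro Least_equality) (auto simp: strict_mono_less[OF assms] strict_mono_less_eq[OF assms] Suc_le_eq)
qed

lemma length_hist [simp]: "length (hist G sE sA N) = Suc N"
  by (induction N) (simp_all add: Let_def)

lemma nth_hist: "i \<le> N \<Longrightarrow> hist G sE sA N ! i = play G sE sA i"
proof (induction N)
  case 0
  then show ?case by (simp add: play_def)
next
  case (Suc N)
  then show ?case by (cases "i \<le> N") (auto simp: Let_def nth_append play_def le_Suc_eq)
qed

lemma play_Suc:
  "play G sE sA (Suc N) =
     (if play G sE sA N \<in> posE G then sE (hist G sE sA N) else sA (hist G sE sA N))"
  by (simp add: play_def Let_def)

lemma hist_Suc_snoc: "hist G sE sA (Suc N) = hist G sE sA N @ [play G sE sA (Suc N)]"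
  by (simp add: Let_def play_def)

lemma history_snoc:
  assumes "history G h" "(last h, x) \<in> moves G"
  shows "history G (h @ [x])"
  using assms unfolding history_def
  by (auto simp: nth_append last_conv_nth not_less less_Suc_eq) (metis diff_Suc_1')

lemma history_hist:
  assumes "strategy G (posE G) sE" "strategy G (posA G) sA"
    and "\<And>h. history G h \<Longrightarrow> last h \<in> posE G \<union> posA G"
  shows "history G (hist G sE sA N)"
proof (induction N)
  case 0
  then show ?case by (simp add: history_def)
next
  case (Suc N)
  have "last (hist G sE sA N) = play G sE sA N" by (simp add: play_def)
  then have "(last (hist G sE sA N), play G sE sA (Suc N)) \<in> moves G"
    using assms Suc unfolding play_Suc strategy_def by (metis Un_iff)
  then show ?case unfolding hist_Suc_snoc by (rule history_snoc[OF Suc])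
qed

lemma play_move:
  assumes "strategy G (posE G) sE" "strategy G (posA G) sA"
    and "\<And>h. history G h \<Longrightarrow> last h \<in> posE G \<union> posA G"
  shows "(play G sE sA N, play G sE sA (Suc N)) \<in> moves G"
  using history_hist[OF assms, of "Suc N"] unfolding history_def
  by (metis length_hist lessI nth_hist le_refl less_imp_le_nat)

lemma hist_cong:
  assumes "\<And>i. i < N \<Longrightarrow>
    (if play G sE sA i \<in> posE G then sE (hist G sE sA i) = sE' (hist G sE sA i)
     else sA (hist G sE sA i) = sA' (hist G sE sA i))"
  shows "hist G sE sA N = hist G sE' sA' N"
  using assms
proof (induction N)
  case 0
  then show ?case by simp
next
  case (Suc N)
  then have "hist G sE sA N = hist G sE' sA' N" by simp
  moreover have "last (hist G sE sA N) = play G sE sA N" by (simp add: play_def)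
  ultimately show ?case using Suc.prems[of N] by (simp add: Let_def split: if_splits)
qed

section \<open>Evolution of hyperassignments\<close>

definition hyperassignment_on :: "'ap asg set set \<Rightarrow> 'ap set \<Rightarrow> bool" where
  "hyperassignment_on \<X> P \<longleftrightarrow> \<X> \<noteq> {} \<and> (\<forall>X\<in>\<X>. X \<noteq> {} \<and> X \<subseteq> Asg P)"

lemma hap_eq:
  assumes "hyperassignment_on \<X> P"
  shows "hap \<X> = P"
proof -
  from assms have "\<exists>\<gamma>. \<exists>X\<in>\<X>. \<gamma> \<in> X" by (auto simp: hyperassignment_on_def)
  then have "\<exists>X\<in>\<X>. (SOME \<gamma>. \<exists>X\<in>\<X>. \<gamma> \<in> X) \<in> X" by (rule someI_ex)
  then show ?thesis using assms unfolding hap_def hyperassignment_on_def Asg_def by auto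
qed

lemma hyperassignment_on_dual:
  assumes "hyperassignment_on \<X> P"
  shows "hyperassignment_on (dual \<X>) P"
proof -
  have "\<forall>X\<in>\<X>. (SOME x. x \<in> X) \<in> X"
    using assms by (simp add: hyperassignment_on_def some_in_eq)
  then have "(\<lambda>X. SOME x. x \<in> X) ` \<X> \<in> dual \<X>" by (auto simp: dual_def)
  then show ?thesis using assms unfolding dual_def hyperassignment_on_def by blast
qed

lemma hyperassignment_on_ext_spec:
  assumes "hyperassignment_on \<X> P"
  shows "hyperassignment_on (ext_spec \<sigma> \<X> p) (insert p P)"
proof -
  obtain X where "X \<in> \<X>" using assms by (auto simp: hyperassignment_on_def)
  moreover have "(\<lambda>_. undefined) \<in> Fnc_spec \<sigma> (hap \<X>)"
    by (simp add: Fnc_spec_def behavioral_def strongly_behavioral_def)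
  ultimately have "ext_spec \<sigma> \<X> p \<noteq> {}" unfolding ext_spec_def by blast
  moreover have "Y \<noteq> {} \<and> Y \<subseteq> Asg (insert p P)" if "Y \<in> ext_spec \<sigma> \<X> p" for Y
    using that assms
    by (fastforce simp: ext_spec_def hyperassignment_on_def ext_set_def ext_asg_def Asg_def)
  ultimately show ?thesis by (simp add: hyperassignment_on_def)
qed

lemma hyperassignment_on_evl_step:
  "hyperassignment_on \<X> P \<Longrightarrow> hyperassignment_on (evl_step \<alpha> \<X> (Q, \<sigma>, p)) (insert p P)"
  by (simp add: evl_step_def hyperassignment_on_ext_spec hyperassignment_on_dual)

lemma hyperassignment_on_evl:
  assumes "hyperassignment_on \<X> P"
  shows "hyperassignment_on (evl \<alpha> \<X> pf) (P \<union> pap pf)"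
  using assms
proof (induction pf arbitrary: \<X> P)
  case Nil
  then show ?case by (simp add: evl_def pap_def pvars_def)
next
  case (Cons e pf)
  obtain Q \<sigma> p where e: "e = (Q, \<sigma>, p)" by (cases e)
  from Cons.IH[OF hyperassignment_on_evl_step[OF Cons.prems]] show ?case
    by (simp add: e evl_def pap_def pvars_def)
qed

lemma dual_dual_subset:
  assumes "X \<in> \<X>"
  shows "\<exists>D\<in>dual (dual \<X>). D \<subseteq> X"
proof -
  let ?c = "\<lambda>Y. SOME x. x \<in> Y \<inter> X"
  have "?c Y \<in> Y \<inter> X" if "Y \<in> dual \<X>" for Y
  proof -
    from that obtain c where "Y = c ` \<X>" "\<forall>X\<in>\<X>. c X \<in> X" by (auto simp: dual_def)
    then have "c X \<in> Y \<inter> X" using assms by auto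
    then show ?thesis by (rule someI[of "\<lambda>x. x \<in> Y \<inter> X"])
  qed
  then have "?c ` dual \<X> \<in> dual (dual \<X>)" "?c ` dual \<X> \<subseteq> X"
    by (auto simp: dual_def[of "dual \<X>"])
  then show ?thesis by blast
qed

lemma dual_meets:
  assumes "T \<in> dual \<X>" "X \<in> \<X>"
  shows "X \<inter> T \<noteq> {}"
  using assms by (auto simp: dual_def)

text \<open>In the \<open>\<exists>\<forall>\<close>-evolution Eloise secures an element of \<open>\<X>\<close>, while Abelard
  secures an element of its dual.\<close>
definition choices :: "quant \<Rightarrow> 'ap asg set set \<Rightarrow> 'ap asg set set" where
  "choices Q \<X> = (if Q = QEx then \<X> else dual \<X>)"

lemma hyperassignment_on_choices:
  "hyperassignment_on \<X> P \<Longrightarrow> hyperassignment_on (choices Q \<X>) P"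
  by (simp add: choices_def hyperassignment_on_dual)

lemma ext_set_mono: "X \<subseteq> S \<Longrightarrow> ext_set X F p \<subseteq> ext_set S F p"
  by (auto simp: ext_set_def)

lemma evl_step_choices:
  assumes "hyperassignment_on \<X> P" "X \<in> choices Q \<X>" "X \<subseteq> S" "F \<in> Fnc_spec \<sigma> P"
  shows "\<exists>X'\<in>choices Q (evl_step ExAll \<X> (Q, \<sigma>, p)). X' \<subseteq> ext_set S F p"
proof (cases Q)
  case QEx
  have "ext_set X F p \<in> ext_spec \<sigma> \<X> p"
    using assms hap_eq[OF assms(1)] unfolding ext_spec_def choices_def QEx by auto
  then show ?thesis
    using ext_set_mono[OF assms(3)] by (auto simp: QEx choices_def evl_step_def coherent_def)
next
  case QAll
  have "ext_set X F p \<in> ext_spec \<sigma> (dual \<X>) p"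
    using assms hap_eq[OF hyperassignment_on_dual[OF assms(1)]]
    unfolding ext_spec_def choices_def QAll by auto
  then obtain D where "D \<in> dual (dual (ext_spec \<sigma> (dual \<X>) p))" "D \<subseteq> ext_set X F p"
    using dual_dual_subset by blast
  then show ?thesis
    using ext_set_mono[OF assms(3), of F p]
    by (simp add: QAll choices_def evl_step_def coherent_def) blast
qed

fun opp :: "quant \<Rightarrow> quant" where
  "opp QEx = QAll"
| "opp QAll = QEx"

lemma opp_neq [simp]: "opp Q \<noteq> Q" "Q \<noteq> opp Q"
  by (cases Q; simp)+

lemma neq_imp_eq_opp: "Q \<noteq> Q' \<Longrightarrow> Q = opp Q'"
  by (cases Q; cases Q') simp_all

lemma length_pvars [simp]: "length (pvars pf) = length pf"
  by (simp add: pvars_def)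

lemma nth_pvars: "j < length pf \<Longrightarrow> pvars pf ! j = snd (snd (pf ! j))"
  by (simp add: pvars_def)

lemma mem_qvars_iff:
  "p \<in> qvars Q pf \<longleftrightarrow> (\<exists>i<length pf. fst (pf ! i) = Q \<and> p = pvars pf ! i)"
  unfolding qvars_def by (fastforce simp: in_set_conv_nth nth_pvars)

lemma mem_qvars_drop:
  assumes "p \<in> qvars Q (drop (Suc j) pf)"
  shows "\<exists>m. j < m \<and> m < length pf \<and> fst (pf ! m) = Q \<and> p = pvars pf ! m"
proof -
  obtain i where "i < length pf - Suc j" "fst (pf ! (Suc j + i)) = Q" "p = pvars pf ! (Suc j + i)"
    using assms by (auto simp: mem_qvars_iff nth_pvars)
  then show ?thesis by (intro exI[of _ "Suc j + i"]) auto
qed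

lemma pap_canon_head: "pap (canon_head Q pf) = qvars Q pf"
  unfolding pap_def pvars_def canon_head_def qvars_def by force

lemma hyperassignment_on_evl_canon_head:
  "hyperassignment_on (evl \<alpha> {{Map.empty}} (canon_head Q pf)) (qvars Q pf)"
  using hyperassignment_on_evl[of "{{Map.empty}}" "{}" \<alpha> "canon_head Q pf"]
  by (simp add: pap_canon_head hyperassignment_on_def Asg_def)

lemma canon_tail_drop_conv_map:
  "canon_tail Q Q' (drop k pf) =
     map (\<lambda>j. (Q, spec_union specB ({}, qvars Q' (drop (Suc j) pf)), pvars pf ! j))
       (filter (\<lambda>j. fst (pf ! j) = Q) [k..<length pf])"
proof (induction "length pf - k" arbitrary: k)
  case 0
  then show ?case by simp
next
  case (Suc d)
  then have "drop k pf = pf ! k # drop (Suc k) pf" "[k..<length pf] = k # [Suc k..<length pf]"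
    by (simp_all add: Cons_nth_drop_Suc upt_conv_Cons)
  with Suc show ?case by (simp add: nth_pvars)
qed

lemma canon_tail_conv_map:
  "canon_tail Q Q' pf =
     map (\<lambda>j. (Q, spec_union specB ({}, qvars Q' (drop (Suc j) pf)), pvars pf ! j))
       (filter (\<lambda>j. fst (pf ! j) = Q) [0..<length pf])"
  using canon_tail_drop_conv_map[of Q Q' 0 pf] by simp

section \<open>The quantification game\<close>

lemma qgame_simps:
  "posE (qgame pf \<Psi>) = {v. \<exists>m<length pf. dom v = set (take m (pvars pf)) \<and> fst (pf ! m) = QEx}"
  "posA (qgame pf \<Psi>) = {v. \<exists>m\<le>length pf. dom v = set (take m (pvars pf))} - posE (qgame pf \<Psi>)"
  "initp (qgame pf \<Psi>) = Map.empty"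
  "moves (qgame pf \<Psi>) = {(v, v'). \<exists>m<length pf. dom v = set (take m (pvars pf)) \<and>
                  dom v' = set (take (Suc m) (pvars pf)) \<and> v \<subseteq>\<^sub>m v'}
              \<union> {(v, Map.empty) | v. dom v = set (pvars pf)}"
  "obsp (qgame pf \<Psi>) = Val (set (pvars pf))"
  "winset (qgame pf \<Psi>) = word ` \<Psi>"
  by (simp_all add: qgame_def Let_def)

definition outcome :: "'ap prefix \<Rightarrow> (nat \<Rightarrow> 'ap val) \<Rightarrow> 'ap asg" where
  "outcome pf \<rho> = (\<lambda>p. if p \<in> set (pvars pf)
     then Some (\<lambda>t. the (\<rho> (t * Suc (length pf) + length pf) p)) else None)"

lemma inj_word: "inj word"
proof (rule injI, rule ext)
  fix \<gamma>1 \<gamma>2 :: "'ap asg" and p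
  assume "word \<gamma>1 = word \<gamma>2"
  then have "map_option (\<lambda>f. f t) (\<gamma>1 p) = map_option (\<lambda>f. f t) (\<gamma>2 p)" for t
    unfolding word_def by meson
  then show "\<gamma>1 p = \<gamma>2 p"
    by (cases "\<gamma>1 p"; cases "\<gamma>2 p") (auto intro: ext)
qed

section \<open>Copying an assignment into a play\<close>

definition positions :: "'p game \<Rightarrow> quant \<Rightarrow> 'p set" where
  "positions G Q = (if Q = QEx then posE G else posA G)"

text \<open>A history of length \<open>i + 1\<close> ends in step \<open>i mod Suc n\<close> of round \<open>i div Suc n\<close>,
  where \<open>n = length pf\<close>: for \<open>m < n\<close> step \<open>m\<close> assigns the \<open>m\<close>-th variable its value at time
  \<open>i div Suc n\<close>, and step \<open>n\<close> resets the complete valuation.\<close>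
definition copy_strategy :: "'ap prefix \<Rightarrow> 'ap asg \<Rightarrow> 'ap val list \<Rightarrow> 'ap val" where
  "copy_strategy pf \<theta> h = (let i = length h - 1; m = i mod Suc (length pf) in
     if m < length pf then (last h)(pvars pf ! m \<mapsto> the (\<theta> (pvars pf ! m)) (i div Suc (length pf)))
     else Map.empty)"

definition player_strategy :: "'ap prefix \<Rightarrow> quant \<Rightarrow> ('ap val list \<Rightarrow> 'ap val) \<Rightarrow> 'ap asg \<Rightarrow>
    quant \<Rightarrow> 'ap val list \<Rightarrow> 'ap val" where
  "player_strategy pf Qc s \<theta> Q = (if Q = Qc then copy_strategy pf \<theta> else s)"

definition copy_play :: "'ap prefix \<Rightarrow> 'ap asg set \<Rightarrow> quant \<Rightarrow> ('ap val list \<Rightarrow> 'ap val) \<Rightarrow>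
    'ap asg \<Rightarrow> nat \<Rightarrow> 'ap val" where
  "copy_play pf \<Psi> Qc s \<theta> =
     play (qgame pf \<Psi>) (player_strategy pf Qc s \<theta> QEx) (player_strategy pf Qc s \<theta> QAll)"

definition known_vars :: "'ap prefix \<Rightarrow> quant \<Rightarrow> nat \<Rightarrow> 'ap set" where
  "known_vars pf Qc j = qvars Qc pf \<union> {pvars pf ! i | i. i < j \<and> i < length pf \<and> fst (pf ! i) \<noteq> Qc}"

definition response :: "'ap prefix \<Rightarrow> 'ap asg set \<Rightarrow> quant \<Rightarrow> ('ap val list \<Rightarrow> 'ap val) \<Rightarrow>
    nat \<Rightarrow> 'ap fnc" where
  "response pf \<Psi> Qc s j \<theta> = the (outcome pf (copy_play pf \<Psi> Qc s \<theta>) (pvars pf ! j))"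

definition outcomes_on :: "'ap prefix \<Rightarrow> 'ap asg set \<Rightarrow> quant \<Rightarrow> ('ap val list \<Rightarrow> 'ap val) \<Rightarrow>
    'ap set \<Rightarrow> 'ap asg set" where
  "outcomes_on pf \<Psi> Qc s P =
     {outcome pf (copy_play pf \<Psi> Qc s \<theta>) |` P | \<theta>. \<theta> \<in> Asg (qvars Qc pf)}"

lemma known_vars_0: "known_vars pf Qc 0 = qvars Qc pf"
  by (simp add: known_vars_def)

lemma known_vars_Suc_copied: "fst (pf ! j) = Qc \<Longrightarrow> known_vars pf Qc (Suc j) = known_vars pf Qc j"
  by (auto simp: known_vars_def less_Suc_eq)

lemma known_vars_Suc:
  "j < length pf \<Longrightarrow> fst (pf ! j) \<noteq> Qc \<Longrightarrow>
     known_vars pf Qc (Suc j) = insert (pvars pf ! j) (known_vars pf Qc j)"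
  by (auto simp: known_vars_def less_Suc_eq)

lemma known_vars_length: "known_vars pf Qc (length pf) = set (pvars pf)"
  unfolding known_vars_def set_conv_nth by (auto simp: mem_qvars_iff) blast

locale quantification_game =
  fixes pf :: "'ap prefix" and \<Psi> :: "'ap asg set"
  assumes distinct_pvars: "distinct (pvars pf)"
begin

abbreviation "xs \<equiv> pvars pf"
abbreviation "n \<equiv> length pf"
abbreviation "G \<equiv> qgame pf \<Psi>"

text \<open>Step \<open>t * Suc n + m\<close> of a play is step \<open>m\<close> of round \<open>t\<close>; keep it in this shape.\<close>
declare mult_Suc_right [simp del]

lemma qgame_move_cases:
  assumes "(v, v') \<in> moves G" "dom v = set (take m xs)" "m \<le> n"
  shows "m < n \<and> dom v' = set (take (Suc m) xs) \<and> v \<subseteq>\<^sub>m v' \<or> m = n \<and> v' = Map.empty"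
proof -
  from assms(1) consider
    (extend) m' where "m' < n" "dom v = set (take m' xs)" "dom v' = set (take (Suc m') xs)" "v \<subseteq>\<^sub>m v'"
  | (reset) "dom v = set xs" "v' = Map.empty"
    unfolding qgame_simps by blast
  then show ?thesis
  proof cases
    case extend
    then have "m' = m"
      using set_take_inj[OF distinct_pvars, of m' m] assms(2,3) by (metis length_pvars less_imp_le_nat)
    with extend show ?thesis by simp
  next
    case reset
    then have "m = n"
      using set_take_inj[OF distinct_pvars, of m n] assms(2,3) by (metis length_pvars order_refl take_all)
    with reset show ?thesis by simp
  qed
qed

lemma qgame_posE_iff:
  assumes "dom v = set (take m xs)" "m \<le> n"
  shows "v \<in> posE G \<longleftrightarrow> m < n \<and> fst (pf ! m) = QEx"
proof
  assume "v \<in> posE G"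
  then obtain m' where "m' < n" "dom v = set (take m' xs)" "fst (pf ! m') = QEx"
    unfolding qgame_simps by blast
  moreover from this have "m' = m"
    using set_take_inj[OF distinct_pvars, of m' m] assms by (metis length_pvars less_imp_le_nat)
  ultimately show "m < n \<and> fst (pf ! m) = QEx" by simp
qed (use assms in \<open>unfold qgame_simps, blast\<close>)

lemma dom_history_nth:
  assumes "history G h" "i < length h"
  shows "dom (h ! i) = set (take (i mod Suc n) xs)"
  using assms(2)
proof (induction i)
  case 0
  then show ?case using assms(1) by (cases h) (auto simp: history_def qgame_simps)
next
  case (Suc i)
  then have "(h ! i, h ! Suc i) \<in> moves G" "dom (h ! i) = set (take (i mod Suc n) xs)"
    using assms(1) by (auto simp: history_def)
  from qgame_move_cases[OF this] show ?case
    by (auto simp: mod_Suc less_Suc_eq_le)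
qed

lemma qgame_history_last:
  assumes "history G h"
  shows "last h \<in> posE G \<union> posA G"
proof -
  have "h \<noteq> []" using assms by (simp add: history_def)
  then have "dom (last h) = set (take ((length h - 1) mod Suc n) xs)"
    using dom_history_nth[OF assms, of "length h - 1"] by (simp add: last_conv_nth)
  moreover have "(length h - 1) mod Suc n \<le> n" by (simp add: less_Suc_eq_le)
  ultimately show ?thesis unfolding qgame_simps by blast
qed

context
  fixes sE sA
  assumes legal_E: "strategy G (posE G) sE" and legal_A: "strategy G (posA G) sA"
begin

lemma dom_play: "dom (play G sE sA i) = set (take (i mod Suc n) xs)"
  using dom_history_nth[OF history_hist[OF legal_E legal_A qgame_history_last], of i i]
  by (simp add: nth_hist)

lemma play_map_le_in_round:
  assumes "m \<le> m'" "m' \<le> n"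
  shows "play G sE sA (t * Suc n + m) \<subseteq>\<^sub>m play G sE sA (t * Suc n + m')"
  using assms(1)
proof (induction m' rule: dec_induct)
  case base
  then show ?case by (simp add: map_le_refl)
next
  case (step k)
  have "dom (play G sE sA (t * Suc n + k)) = set (take k xs)"
    using step.hyps assms(2) dom_play[of "t * Suc n + k"] by simp
  from qgame_move_cases[OF play_move[OF legal_E legal_A qgame_history_last] this] step assms(2)
  show ?case by (auto intro: map_le_trans)
qed

lemma play_at_round_end:
  assumes "m < n"
  shows "play G sE sA (t * Suc n + n) (xs ! m) = play G sE sA (Suc (t * Suc n + m)) (xs ! m)"
proof -
  have "xs ! m \<in> dom (play G sE sA (t * Suc n + Suc m))"
    using assms dom_play[of "t * Suc n + Suc m"] by (simp add: take_Suc_conv_app_nth)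
  moreover have "play G sE sA (t * Suc n + Suc m) \<subseteq>\<^sub>m play G sE sA (t * Suc n + n)"
    using assms by (intro play_map_le_in_round) simp_all
  ultimately show ?thesis by (simp add: map_le_def)
qed

lemma observation_play:
  "observation (obsp G) (play G sE sA) = Some (word (outcome pf (play G sE sA)))"
proof -
  let ?\<rho> = "play G sE sA" and ?r = "\<lambda>t. t * Suc n + n"
  have "?\<rho> i \<in> obsp G \<longleftrightarrow> i \<in> range ?r" for i
  proof -
    have "?\<rho> i \<in> obsp G \<longleftrightarrow> set (take (i mod Suc n) xs) = set (take n xs)"
      using dom_play[of i] by (simp add: qgame_simps Val_def)
    also have "\<dots> \<longleftrightarrow> i mod Suc n = n"
      using set_take_inj[OF distinct_pvars, of "i mod Suc n" n]
      by (metis length_pvars less_Suc_eq_le mod_less_divisor order_refl zero_less_Suc)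
    also have "\<dots> \<longleftrightarrow> i \<in> range ?r"
      by (metis (no_types, lifting) div_mult_mod_eq imageE lessI mod_less mod_mult_self3 rangeI)
    finally show ?thesis .
  qed
  then have "{i. ?\<rho> i \<in> obsp G} = range ?r" by blast
  moreover have "strict_mono ?r" by (rule strict_monoI) simp
  moreover have "word (outcome pf ?\<rho>) t = ?\<rho> (?r t)" for t
  proof
    fix p
    have "dom (?\<rho> (?r t)) = set xs" using dom_play[of "?r t"] by simp
    then show "word (outcome pf ?\<rho>) t p = ?\<rho> (?r t) p"
      by (cases "?\<rho> (?r t) p") (auto simp: word_def outcome_def)
  qed
  ultimately show ?thesis
    by (simp add: observation_def range_inj_infinite strict_mono_imp_inj_on
        enumerate_range_strict_mono comp_def fun_eq_iff)
qed

end

lemma copy_strategy_legal: "strategy G S (copy_strategy pf \<theta>)"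
  unfolding strategy_def
proof (intro allI impI)
  fix h assume "history G h \<and> last h \<in> S"
  then have h: "history G h" ..
  define i m where "i = length h - 1" and "m = i mod Suc n"
  have "h \<noteq> []" "last h = h ! i" using h by (auto simp: history_def i_def last_conv_nth)
  then have dom_last: "dom (last h) = set (take m xs)"
    using dom_history_nth[OF h, of i] by (simp add: i_def m_def)
  have "m < Suc n" by (simp add: m_def)
  then consider "m < n" | "m = n" by linarith
  then show "(last h, copy_strategy pf \<theta> h) \<in> moves G"
  proof cases
    case 1
    then have "xs ! m \<notin> dom (last h)"
      using dom_last nth_notin_set_take[OF distinct_pvars] by simp
    then have "last h \<subseteq>\<^sub>m (last h)(xs ! m \<mapsto> the (\<theta> (xs ! m)) (i div Suc n))"
      by (auto simp: map_le_def)
    moreover have "dom ((last h)(xs ! m \<mapsto> the (\<theta> (xs ! m)) (i div Suc n))) = set (take (Suc m) xs)"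
      using 1 dom_last by (simp add: take_Suc_conv_app_nth)
    ultimately show ?thesis
      using 1 dom_last unfolding qgame_simps copy_strategy_def Let_def i_def[symmetric] m_def[symmetric]
      by auto
  next
    case 2
    then show ?thesis
      using dom_last unfolding qgame_simps copy_strategy_def Let_def i_def[symmetric] m_def[symmetric]
      by simp
  qed
qed

end

locale copy_play_setting = quantification_game +
  fixes Qc :: quant and s
  assumes legal_s: "strategy (qgame pf \<Psi>) (positions (qgame pf \<Psi>) (opp Qc)) s"
begin

abbreviation "copy_hist \<theta> \<equiv> hist G (player_strategy pf Qc s \<theta> QEx) (player_strategy pf Qc s \<theta> QAll)"

lemma player_strategy_legal: "strategy G (positions G Q) (player_strategy pf Qc s \<theta> Q)"
  using legal_s copy_strategy_legal neq_imp_eq_opp[of Q Qc]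
  by (cases "Q = Qc") (auto simp: player_strategy_def)

lemma player_strategies_legal:
  "strategy G (posE G) (player_strategy pf Qc s \<theta> QEx)"
  "strategy G (posA G) (player_strategy pf Qc s \<theta> QAll)"
  using player_strategy_legal[of QEx] player_strategy_legal[of QAll] by (simp_all add: positions_def)

lemma dom_copy_play: "dom (copy_play pf \<Psi> Qc s \<theta> i) = set (take (i mod Suc n) xs)"
  unfolding copy_play_def by (rule dom_play[OF player_strategies_legal])

lemma copy_play_at_round_end:
  "m < n \<Longrightarrow> copy_play pf \<Psi> Qc s \<theta> (t * Suc n + n) (xs ! m)
      = copy_play pf \<Psi> Qc s \<theta> (Suc (t * Suc n + m)) (xs ! m)"
  unfolding copy_play_def by (rule play_at_round_end[OF player_strategies_legal])

lemma copy_play_Suc: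
  assumes "i mod Suc n < n"
  shows "copy_play pf \<Psi> Qc s \<theta> (Suc i) =
    player_strategy pf Qc s \<theta> (fst (pf ! (i mod Suc n))) (copy_hist \<theta> i)"
proof -
  have "copy_play pf \<Psi> Qc s \<theta> i \<in> posE G \<longleftrightarrow> fst (pf ! (i mod Suc n)) = QEx"
    using qgame_posE_iff[OF dom_copy_play] assms by simp
  then show ?thesis
    by (cases "fst (pf ! (i mod Suc n))") (simp_all add: copy_play_def play_Suc)
qed

lemma copy_play_copies:
  assumes "m < n" "fst (pf ! m) = Qc"
  shows "copy_play pf \<Psi> Qc s \<theta> (t * Suc n + n) (xs ! m) = Some (the (\<theta> (xs ! m)) t)"
proof -
  have "copy_play pf \<Psi> Qc s \<theta> (Suc (t * Suc n + m)) =
      (copy_play pf \<Psi> Qc s \<theta> (t * Suc n + m))(xs ! m \<mapsto> the (\<theta> (xs ! m)) t)"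
    using copy_play_Suc[of "t * Suc n + m" \<theta>] assms
    by (simp add: player_strategy_def copy_strategy_def copy_play_def play_def)
  then show ?thesis using copy_play_at_round_end[OF assms(1)] by simp
qed

lemma copy_play_cong:
  assumes "\<And>m t. m < n \<Longrightarrow> fst (pf ! m) = Qc \<Longrightarrow> t * Suc n + m < N \<Longrightarrow>
      the (\<theta>1 (xs ! m)) t = the (\<theta>2 (xs ! m)) t"
  shows "copy_play pf \<Psi> Qc s \<theta>1 N = copy_play pf \<Psi> Qc s \<theta>2 N"
proof -
  have "copy_hist \<theta>1 N = copy_hist \<theta>2 N"
  proof (rule hist_cong)
    fix i assume "i < N"
    have agree: "the (\<theta>1 (xs ! (i mod Suc n))) (i div Suc n) = the (\<theta>2 (xs ! (i mod Suc n))) (i div Suc n)"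
      if "i mod Suc n < n" "fst (pf ! (i mod Suc n)) = Qc"
      using assms[OF that] \<open>i < N\<close> by simp
    have same: "player_strategy pf Qc s \<theta>1 Q (copy_hist \<theta>1 i) = player_strategy pf Qc s \<theta>2 Q (copy_hist \<theta>1 i)"
      if "i mod Suc n < n \<Longrightarrow> Q = fst (pf ! (i mod Suc n))" for Q
      using that agree by (cases "Q = Qc") (auto simp: player_strategy_def copy_strategy_def Let_def)
    have "copy_play pf \<Psi> Qc s \<theta>1 i \<in> posE G \<longleftrightarrow> i mod Suc n < n \<and> fst (pf ! (i mod Suc n)) = QEx"
      using qgame_posE_iff[OF dom_copy_play] by (simp add: less_Suc_eq_le)
    then show "if play G (player_strategy pf Qc s \<theta>1 QEx) (player_strategy pf Qc s \<theta>1 QAll) i \<in> posE G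
        then player_strategy pf Qc s \<theta>1 QEx (copy_hist \<theta>1 i) = player_strategy pf Qc s \<theta>2 QEx (copy_hist \<theta>1 i)
        else player_strategy pf Qc s \<theta>1 QAll (copy_hist \<theta>1 i) = player_strategy pf Qc s \<theta>2 QAll (copy_hist \<theta>1 i)"
      using same[of QEx] same[of QAll] neq_imp_eq_opp[of "fst (pf ! (i mod Suc n))" QEx]
      by (auto simp: copy_play_def)
  qed
  then show ?thesis by (simp add: copy_play_def play_def)
qed

lemma copy_play_eq:
  assumes "\<forall>p\<in>qvars Qc pf. \<theta>1 p = \<theta>2 p"
  shows "copy_play pf \<Psi> Qc s \<theta>1 = copy_play pf \<Psi> Qc s \<theta>2"
proof (rule ext, rule copy_play_cong)
  fix m t N assume "m < n" "fst (pf ! m) = Qc"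
  then have "xs ! m \<in> qvars Qc pf" by (auto simp: mem_qvars_iff)
  then show "the (\<theta>1 (xs ! m)) t = the (\<theta>2 (xs ! m)) t" using assms by simp
qed

lemma outcome_copy_play_restrict:
  assumes "\<theta> \<in> Asg (qvars Qc pf)"
  shows "outcome pf (copy_play pf \<Psi> Qc s \<theta>) |` qvars Qc pf = \<theta>"
proof
  fix p
  show "(outcome pf (copy_play pf \<Psi> Qc s \<theta>) |` qvars Qc pf) p = \<theta> p"
  proof (cases "p \<in> qvars Qc pf")
    case True
    then obtain m where m: "m < n" "fst (pf ! m) = Qc" "p = xs ! m" by (auto simp: mem_qvars_iff)
    moreover obtain f where "\<theta> p = Some f" using True assms by (auto simp: Asg_def)
    ultimately show ?thesis using copy_play_copies[OF m(1,2)] True by (simp add: outcome_def)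
  next
    case False
    then have "p \<notin> dom \<theta>" using assms by (simp add: Asg_def)
    with False show ?thesis by (simp add: domIff)
  qed
qed

lemma response_eq:
  assumes "j < n"
    and "\<And>m t. m < n \<Longrightarrow> fst (pf ! m) = Qc \<Longrightarrow> t * Suc n + m \<le> k * Suc n + j \<Longrightarrow>
      the (\<psi>1 (xs ! m)) t = the (\<psi>2 (xs ! m)) t"
  shows "response pf \<Psi> Qc s j \<psi>1 k = response pf \<Psi> Qc s j \<psi>2 k"
proof -
  have "response pf \<Psi> Qc s j \<psi> k = the (copy_play pf \<Psi> Qc s \<psi> (Suc (k * Suc n + j)) (xs ! j))" for \<psi>
    using copy_play_at_round_end[OF assms(1)] assms(1) by (simp add: response_def outcome_def)
  moreover have "copy_play pf \<Psi> Qc s \<psi>1 (Suc (k * Suc n + j)) = copy_play pf \<Psi> Qc s \<psi>2 (Suc (k * Suc n + j))"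
    by (rule copy_play_cong) (simp add: assms(2) less_Suc_eq_le)
  ultimately show ?thesis by simp
qed

lemma copied_var_known: "m < n \<Longrightarrow> fst (pf ! m) = Qc \<Longrightarrow> xs ! m \<in> known_vars pf Qc j"
  by (auto simp: known_vars_def mem_qvars_iff)

lemma response_behavioral:
  assumes "j < n" "p \<in> known_vars pf Qc j"
  shows "behavioral (known_vars pf Qc j) (response pf \<Psi> Qc s j) p"
  unfolding behavioral_def
proof (intro allI ballI impI)
  fix k \<psi>1 \<psi>2 assume agree: "approx_gt (known_vars pf Qc j) p k \<psi>1 \<psi>2"
  show "response pf \<Psi> Qc s j \<psi>1 k = response pf \<Psi> Qc s j \<psi>2 k"
  proof (rule response_eq[OF assms(1)])
    fix m t assume m: "m < n" "fst (pf ! m) = Qc" and "t * Suc n + m \<le> k * Suc n + j"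
    then have "t \<le> k" using assms(1) by (intro slot_le[of t "Suc n" m k j]) simp_all
    show "the (\<psi>1 (xs ! m)) t = the (\<psi>2 (xs ! m)) t"
    proof (cases "xs ! m = p")
      case True
      with agree \<open>t \<le> k\<close> show ?thesis by (simp add: approx_gt_def)
    next
      case False
      with agree copied_var_known[OF m] show ?thesis by (simp add: approx_gt_def)
    qed
  qed
qed

lemma response_strongly_behavioral:
  assumes "j < n" "p \<in> qvars Qc (drop (Suc j) pf)"
  shows "strongly_behavioral (known_vars pf Qc j) (response pf \<Psi> Qc s j) p"
  unfolding strongly_behavioral_def
proof (intro allI ballI impI)
  fix k \<psi>1 \<psi>2 assume agree: "approx_ge (known_vars pf Qc j) p k \<psi>1 \<psi>2"
  obtain m' where m': "j < m'" "m' < n" "p = xs ! m'" using mem_qvars_drop[OF assms(2)] by blast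
  show "response pf \<Psi> Qc s j \<psi>1 k = response pf \<Psi> Qc s j \<psi>2 k"
  proof (rule response_eq[OF assms(1)])
    fix m t assume m: "m < n" "fst (pf ! m) = Qc" and slot: "t * Suc n + m \<le> k * Suc n + j"
    have "t < k" if "xs ! m = p"
    proof -
      have "m = m'" using that m'(2,3) m(1) distinct_pvars by (simp add: nth_eq_iff_index_eq)
      then show ?thesis using slot m'(1) by (intro slot_less[of t "Suc n" m k j]) simp_all
    qed
    show "the (\<psi>1 (xs ! m)) t = the (\<psi>2 (xs ! m)) t"
    proof (cases "xs ! m = p")
      case True
      with agree \<open>xs ! m = p \<Longrightarrow> t < k\<close> show ?thesis by (simp add: approx_ge_def)
    next
      case False
      with agree copied_var_known[OF m] show ?thesis by (simp add: approx_ge_def)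
    qed
  qed
qed

lemma response_Fnc_spec:
  assumes "j < n"
  shows "response pf \<Psi> Qc s j \<in>
    Fnc_spec (spec_union specB ({}, qvars Qc (drop (Suc j) pf))) (known_vars pf Qc j)"
  using response_behavioral[OF assms] response_strongly_behavioral[OF assms]
  unfolding Fnc_spec_def spec_union_def specB_def by auto

lemma Asg_subset_outcomes_on: "Asg (qvars Qc pf) \<subseteq> outcomes_on pf \<Psi> Qc s (qvars Qc pf)"
  using outcome_copy_play_restrict unfolding outcomes_on_def by force

lemma outcomes_on_all_vars:
  "outcomes_on pf \<Psi> Qc s (set xs) = {outcome pf (copy_play pf \<Psi> Qc s \<theta>) | \<theta>. \<theta> \<in> Asg (qvars Qc pf)}"
proof -
  have "outcome pf \<rho> |` set xs = outcome pf \<rho>" for \<rho>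
    by (rule ext) (simp add: restrict_map_def outcome_def)
  then show ?thesis by (simp add: outcomes_on_def)
qed

lemma ext_set_outcomes_on:
  assumes "j < n" "fst (pf ! j) \<noteq> Qc"
  shows "ext_set (outcomes_on pf \<Psi> Qc s (known_vars pf Qc j)) (response pf \<Psi> Qc s j) (xs ! j)
    \<subseteq> outcomes_on pf \<Psi> Qc s (known_vars pf Qc (Suc j))"
proof
  fix \<gamma> assume "\<gamma> \<in> ext_set (outcomes_on pf \<Psi> Qc s (known_vars pf Qc j)) (response pf \<Psi> Qc s j) (xs ! j)"
  then obtain \<theta> where \<theta>: "\<theta> \<in> Asg (qvars Qc pf)"
    and \<gamma>: "\<gamma> = ext_asg (outcome pf (copy_play pf \<Psi> Qc s \<theta>) |` known_vars pf Qc j) (response pf \<Psi> Qc s j) (xs ! j)"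
    by (auto simp: ext_set_def outcomes_on_def)
  let ?o = "outcome pf (copy_play pf \<Psi> Qc s \<theta>)"
  have "(?o |` known_vars pf Qc j) p = \<theta> p" if "p \<in> qvars Qc pf" for p
  proof -
    have "(?o |` known_vars pf Qc j) p = (?o |` qvars Qc pf) p" using that by (simp add: known_vars_def)
    then show ?thesis by (simp add: outcome_copy_play_restrict[OF \<theta>])
  qed
  then have "copy_play pf \<Psi> Qc s (?o |` known_vars pf Qc j) = copy_play pf \<Psi> Qc s \<theta>"
    by (intro copy_play_eq) blast
  then have "response pf \<Psi> Qc s j (?o |` known_vars pf Qc j) = the (?o (xs ! j))"
    by (simp add: response_def)
  moreover have "?o (xs ! j) = Some (the (?o (xs ! j)))"
    using assms(1) by (simp add: outcome_def)
  ultimately have "\<gamma> = (?o |` known_vars pf Qc j)(xs ! j := ?o (xs ! j))"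
    by (simp add: \<gamma> ext_asg_def)
  also have "\<dots> = ?o |` known_vars pf Qc (Suc j)"
    using assms by (simp add: known_vars_Suc restrict_map_insert)
  finally have "\<gamma> = ?o |` known_vars pf Qc (Suc j)" .
  then show "\<gamma> \<in> outcomes_on pf \<Psi> Qc s (known_vars pf Qc (Suc j))"
    using \<theta> by (auto simp: outcomes_on_def)
qed

lemma outcomes_on_evl_step:
  assumes "hyperassignment_on \<X> (known_vars pf Qc j)" "j < n" "fst (pf ! j) = opp Qc"
    and "X \<in> choices (opp Qc) \<X>" "X \<subseteq> outcomes_on pf \<Psi> Qc s (known_vars pf Qc j)"
  shows "\<exists>X'\<in>choices (opp Qc)
      (evl_step ExAll \<X> (opp Qc, spec_union specB ({}, qvars Qc (drop (Suc j) pf)), xs ! j)).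
    X' \<subseteq> outcomes_on pf \<Psi> Qc s (known_vars pf Qc (Suc j))"
proof -
  obtain X' where "X' \<in> choices (opp Qc)
      (evl_step ExAll \<X> (opp Qc, spec_union specB ({}, qvars Qc (drop (Suc j) pf)), xs ! j))"
    and "X' \<subseteq> ext_set (outcomes_on pf \<Psi> Qc s (known_vars pf Qc j)) (response pf \<Psi> Qc s j) (xs ! j)"
    using evl_step_choices[OF assms(1,4,5) response_Fnc_spec[OF assms(2)]] by blast
  moreover have "fst (pf ! j) \<noteq> Qc" using assms(3) by simp
  ultimately show ?thesis using ext_set_outcomes_on[OF assms(2)] by blast
qed

lemma canonical_evolution_secures_outcomes:
  "\<exists>X\<in>choices (opp Qc) (evl_prefix ExAll (canon_head Qc pf @ canon_tail (opp Qc) Qc pf)).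
     X \<subseteq> outcomes_on pf \<Psi> Qc s (set xs)"
proof -
  define entry where "entry = (\<lambda>j. (opp Qc, spec_union specB ({}, qvars Qc (drop (Suc j) pf)), xs ! j))"
  define stage where "stage j = evl ExAll {{Map.empty}}
    (canon_head Qc pf @ map entry (filter (\<lambda>i. fst (pf ! i) = opp Qc) [0..<j]))" for j
  have invariant: "hyperassignment_on (stage j) (known_vars pf Qc j) \<and>
      (\<exists>X\<in>choices (opp Qc) (stage j). X \<subseteq> outcomes_on pf \<Psi> Qc s (known_vars pf Qc j))"
    if "j \<le> n" for j
    using that
  proof (induction j)
    case 0
    have hyper: "hyperassignment_on (stage 0) (qvars Qc pf)"
      by (simp add: stage_def hyperassignment_on_evl_canon_head)
    moreover obtain X where "X \<in> choices (opp Qc) (stage 0)" "X \<subseteq> Asg (qvars Qc pf)"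
      using hyperassignment_on_choices[OF hyper] unfolding hyperassignment_on_def by blast
    moreover note Asg_subset_outcomes_on
    ultimately show ?case unfolding known_vars_0 by (meson order_trans)
  next
    case (Suc j)
    then have hyper: "hyperassignment_on (stage j) (known_vars pf Qc j)"
      and secured: "\<exists>X\<in>choices (opp Qc) (stage j). X \<subseteq> outcomes_on pf \<Psi> Qc s (known_vars pf Qc j)"
      by simp_all
    show ?case
    proof (cases "fst (pf ! j) = Qc")
      case True
      then show ?thesis using hyper secured by (simp add: stage_def known_vars_Suc_copied)
    next
      case False
      then have owner: "fst (pf ! j) = opp Qc" by (rule neq_imp_eq_opp)
      then have "stage (Suc j) = evl_step ExAll (stage j) (entry j)"
        by (simp add: stage_def evl_def)
      moreover have "known_vars pf Qc (Suc j) = insert (xs ! j) (known_vars pf Qc j)"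
        using False Suc.prems by (simp add: known_vars_Suc)
      ultimately show ?thesis
        using hyperassignment_on_evl_step[OF hyper] outcomes_on_evl_step[OF hyper _ owner] secured Suc.prems
        by (simp add: entry_def) blast
    qed
  qed
  have "evl_prefix ExAll (canon_head Qc pf @ canon_tail (opp Qc) Qc pf) = stage n"
    by (simp add: stage_def entry_def evl_prefix_def canon_tail_conv_map)
  then show ?thesis using invariant[of n] known_vars_length[of pf Qc] by simp
qed

end

context quantification_game
begin

lemma eloise_wins_imp_secures:
  assumes "eloise_wins G"
  shows "\<exists>E\<in>evl_prefix ExAll (C_AE pf). E \<subseteq> \<Psi>"
proof -
  obtain sE where legal: "strategy G (posE G) sE"
    and wins: "\<And>sA. strategy G (posA G) sA \<Longrightarrow> observation (obsp G) (play G sE sA) \<in> Some ` winset G"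
    using assms by (auto simp: eloise_wins_def)
  interpret copy_play_setting pf \<Psi> QAll sE
    by unfold_locales (use legal in \<open>simp add: positions_def\<close>)
  have "outcome pf (copy_play pf \<Psi> QAll sE \<theta>) \<in> \<Psi>" for \<theta>
  proof -
    have "copy_play pf \<Psi> QAll sE \<theta> = play G sE (copy_strategy pf \<theta>)"
      by (simp add: copy_play_def player_strategy_def)
    then have "word (outcome pf (copy_play pf \<Psi> QAll sE \<theta>)) \<in> word ` \<Psi>"
      using wins[OF copy_strategy_legal] observation_play[OF legal copy_strategy_legal]
      by (auto simp: qgame_simps)
    then show ?thesis using inj_word by (auto dest: injD)
  qed
  moreover obtain E
    where "E \<in> evl_prefix ExAll (C_AE pf)" "E \<subseteq> outcomes_on pf \<Psi> QAll sE (set xs)"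
    using canonical_evolution_secures_outcomes by (auto simp: C_AE_def choices_def)
  ultimately show ?thesis unfolding outcomes_on_all_vars by blast
qed

lemma abelard_wins_imp_avoids:
  assumes "abelard_wins G"
  shows "\<forall>E\<in>evl_prefix ExAll (C_EA pf). \<not> E \<subseteq> \<Psi>"
proof -
  obtain sA where legal: "strategy G (posA G) sA"
    and wins: "\<And>sE. strategy G (posE G) sE \<Longrightarrow> observation (obsp G) (play G sE sA) \<notin> Some ` winset G"
    using assms by (auto simp: abelard_wins_def)
  interpret copy_play_setting pf \<Psi> QEx sA
    by unfold_locales (use legal in \<open>simp add: positions_def\<close>)
  have lose: "outcome pf (copy_play pf \<Psi> QEx sA \<theta>) \<notin> \<Psi>" for \<theta>
  proof -
    have "copy_play pf \<Psi> QEx sA \<theta> = play G (copy_strategy pf \<theta>) sA"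
      by (simp add: copy_play_def player_strategy_def)
    then show ?thesis
      using wins[OF copy_strategy_legal] observation_play[OF copy_strategy_legal legal]
      by (auto simp: qgame_simps)
  qed
  obtain T where T: "T \<in> dual (evl_prefix ExAll (C_EA pf))" "T \<subseteq> outcomes_on pf \<Psi> QEx sA (set xs)"
    using canonical_evolution_secures_outcomes by (auto simp: C_EA_def choices_def)
  show ?thesis
  proof (intro ballI notI)
    fix E assume "E \<in> evl_prefix ExAll (C_EA pf)" "E \<subseteq> \<Psi>"
    then obtain \<gamma> where "\<gamma> \<in> T" "\<gamma> \<in> \<Psi>" using dual_meets[OF T(1)] by blast
    then show False using T(2) lose by (auto simp: outcomes_on_all_vars)
  qed
qed

end

theorem mainTheorem15:
  fixes pf :: "'ap prefix" and \<Psi> :: "'ap asg set"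
  assumes "behavioral_prefix pf"
    and "distinct (pvars pf)"
    and "\<Psi> \<subseteq> Asg (pap pf)"
    and "borelian (pap pf) \<Psi>"
  shows "(eloise_wins (qgame pf \<Psi>) \<longrightarrow> (\<exists>E\<in>evl_prefix ExAll (C_AE pf). E \<subseteq> \<Psi>))
       \<and> (abelard_wins (qgame pf \<Psi>) \<longrightarrow> (\<forall>E\<in>evl_prefix ExAll (C_EA pf). \<not> E \<subseteq> \<Psi>))"
proof -
  interpret quantification_game pf \<Psi> by unfold_locales (fact assms(2))
  show ?thesis using eloise_wins_imp_secures abelard_wins_imp_avoids by blast
qed

end
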